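(* Let $\mathcal{X},\mathcal{Y}$ be finite sets, $P$ a joint probability mass function on $\mathcal{X}\times\mathcal{Y}$ with $P(x,y)>0$ for all $(x,y)$, and $q\in\mathbb{R}$. Let $G^\ast$ be a conditional guessing function that is optimal under $q$-non-extensivity, i.e. for every $y\in\mathcal{Y}$ and $x,x'\in\mathcal{X}$, $G^\ast(x|y)<G^\ast(x'|y)$ implies $P_q(x|y)\ge P_q(x'|y)$. Then for every $\rho>0$, $$ E_q[G^\ast(X|Y)^\rho]\;\leq\;\sum_{y\in\mathcal{Y}}P_q(\cdot,y)\left[\sum_{x\in\mathcal{X}}P_q(x|y)^{\frac{1}{1+\rho}}\right]^{1+\rho} =\frac{\sum_{y\in\mathcal{Y}}\left[\sum_{x\in\mathcal{X}}P(x,y)^{\frac{q}{1+\rho}}\right]^{1+\rho}}{\sum_{y\in\mathcal{Y}}\sum_{x\in\mathcal{X}}P(x,y)^q}. $$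
   Context: A conditional guessing function is a map $G(\cdot|\cdot)$ on $\mathcal{X}\times\mathcal{Y}$ such that for each $y$, $x\mapsto G(x|y)$ is a bijection from $\mathcal{X}$ onto $\{1,\dots,|\mathcal{X}|\}$. The $q$-normalized expectation under $P$ is $E_q[F(X,Y)]=\frac{\sum_{x,y}F(x,y)P(x,y)^q}{\sum_{x,y}P(x,y)^q}$. Escort distributions: $P(x|y)=P(x,y)/\sum_{x'}P(x',y)$; $P_q(x|y)=\frac{P(x|y)^q}{\sum_{x'\in\mathcal{X}}P(x'|y)^q}$; $P_q(\cdot,y)=\frac{\sum_{x\in\mathcal{X}}P(x,y)^q}{\sum_{x'\in\mathcal{X},y'\in\mathcal{Y}}P(x',y')^q}$. *)

theory Defs
  imports "HOL-Analysis.Analysis"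
begin

definition cond_guessing :: "('x::finite \<Rightarrow> 'y \<Rightarrow> nat) \<Rightarrow> bool" where
  "cond_guessing G \<longleftrightarrow> (\<forall>y. bij_betw (\<lambda>x. G x y) UNIV {1..CARD('x)})"

definition q_expect :: "real \<Rightarrow> ('x::finite \<Rightarrow> 'y::finite \<Rightarrow> real) \<Rightarrow> ('x \<Rightarrow> 'y \<Rightarrow> real) \<Rightarrow> real" where
  "q_expect q P F = (\<Sum>x\<in>UNIV. \<Sum>y\<in>UNIV. F x y * P x y powr q) /
                     (\<Sum>x\<in>UNIV. \<Sum>y\<in>UNIV. P x y powr q)"

definition cond_prob :: "('x::finite \<Rightarrow> 'y \<Rightarrow> real) \<Rightarrow> 'x \<Rightarrow> 'y \<Rightarrow> real" where
  "cond_prob P x y = P x y / (\<Sum>x'\<in>UNIV. P x' y)"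

definition escort_cond :: "real \<Rightarrow> ('x::finite \<Rightarrow> 'y \<Rightarrow> real) \<Rightarrow> 'x \<Rightarrow> 'y \<Rightarrow> real" where
  "escort_cond q P x y = cond_prob P x y powr q / (\<Sum>x'\<in>UNIV. cond_prob P x' y powr q)"

definition escort_marg :: "real \<Rightarrow> ('x::finite \<Rightarrow> 'y::finite \<Rightarrow> real) \<Rightarrow> 'y \<Rightarrow> real" where
  "escort_marg q P y = (\<Sum>x\<in>UNIV. P x y powr q) / (\<Sum>x'\<in>UNIV. \<Sum>y'\<in>UNIV. P x' y' powr q)"

end

theory Submission
  imports Defs
begin

text \<open>Arikan's argument: if the guess rank of \<open>x\<close> is \<open>k\<close>, all \<open>k\<close> candidates guessed no later
  are at least as likely, so \<open>k \<le> \<Sum>x'. (a x' / a x) powr r\<close> for every \<open>r \<ge> 0\<close>; with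
  \<open>r = 1/(1+\<rho>)\<close> this bounds the \<open>\<rho>\<close>-th moment of the rank by
  \<open>(\<Sum>x. a x powr (1/(1+\<rho>))) powr (1+\<rho>)\<close>. Under the escort distributions the \<open>q\<close>-normalized
  expectation splits into escort-marginal-weighted conditional moments, to which this bound
  applies for each \<open>y\<close>; the closed form follows by scaling.\<close>

lemma card_rank_initial_segment:
  assumes bij: "bij_betw g A {1..n::nat}" and x: "x \<in> A"
  shows "card {x'\<in>A. g x' \<le> g x} = g x"
proof -
  have "g x \<le> n" using bij x by (auto dest: bij_betw_apply)
  have "g ` {x'\<in>A. g x' \<le> g x} = {k \<in> g ` A. k \<le> g x}" by auto
  also have "\<dots> = {1..g x}" using bij \<open>g x \<le> n\<close> by (auto simp: bij_betw_def)
  finally show ?thesis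
    using bij by (metis (no_types, lifting) bij_betw_def card_atLeastAtMost card_image
        diff_Suc_1 inj_on_subset mem_Collect_eq subsetI)
qed

lemma rank_le_sum_powr_ratio:
  fixes a :: "'a \<Rightarrow> real"
  assumes bij: "bij_betw g A {1..n}" and x: "x \<in> A"
    and pos: "\<And>x. x \<in> A \<Longrightarrow> a x > 0"
    and opt: "\<And>x x'. x \<in> A \<Longrightarrow> x' \<in> A \<Longrightarrow> g x < g x' \<Longrightarrow> a x' \<le> a x"
    and r: "r \<ge> 0"
  shows "real (g x) \<le> (\<Sum>x'\<in>A. a x' powr r) / a x powr r"
proof -
  let ?B = "{x'\<in>A. g x' \<le> g x}"
  have "finite A" using bij bij_betw_finite by blast
  have "real (g x) = (\<Sum>x'\<in>?B. 1)" using card_rank_initial_segment[OF bij x] by simp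
  also have "\<dots> \<le> (\<Sum>x'\<in>?B. (a x' / a x) powr r)"
  proof (rule sum_mono)
    fix x' assume x': "x' \<in> ?B"
    then have "g x' < g x \<or> x' = x"
      using bij x by (auto simp: bij_betw_def inj_on_eq_iff order.order_iff_strict)
    then have "a x \<le> a x'" using opt x x' by auto
    then show "1 \<le> (a x' / a x) powr r" using pos[OF x] r by (simp add: ge_one_powr_ge_zero)
  qed
  also have "\<dots> \<le> (\<Sum>x'\<in>A. (a x' / a x) powr r)"
    using \<open>finite A\<close> by (intro sum_mono2) auto
  also have "\<dots> = (\<Sum>x'\<in>A. a x' powr r) / a x powr r"
    using pos x by (simp add: powr_divide less_imp_le sum_divide_distrib)
  finally show ?thesis .
qed

lemma guessing_moment_le:
  fixes a :: "'a \<Rightarrow> real"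
  assumes bij: "bij_betw g A {1..n}"
    and pos: "\<And>x. x \<in> A \<Longrightarrow> a x > 0"
    and opt: "\<And>x x'. x \<in> A \<Longrightarrow> x' \<in> A \<Longrightarrow> g x < g x' \<Longrightarrow> a x' \<le> a x"
    and rho: "\<rho> \<ge> 0"
  shows "(\<Sum>x\<in>A. real (g x) powr \<rho> * a x) \<le> (\<Sum>x\<in>A. a x powr (1 / (1 + \<rho>))) powr (1 + \<rho>)"
proof -
  define r where "r = 1 / (1 + \<rho>)"
  define S where "S = (\<Sum>x\<in>A. a x powr r)"
  have "r \<ge> 0" "1 - r * \<rho> = r" using rho by (auto simp: r_def field_simps)
  have "S \<ge> 0" unfolding S_def by (simp add: sum_nonneg)
  have term_le: "real (g x) powr \<rho> * a x \<le> S powr \<rho> * a x powr r" if x: "x \<in> A" for x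
  proof -
    have ax: "a x > 0" using pos x by blast
    have "real (g x) powr \<rho> \<le> (S / a x powr r) powr \<rho>"
      using rank_le_sum_powr_ratio[OF bij x pos opt \<open>r \<ge> 0\<close>] rho
      by (intro powr_mono2) (auto simp: S_def)
    also have "\<dots> = S powr \<rho> / a x powr (r * \<rho>)"
      using \<open>S \<ge> 0\<close> ax by (simp add: powr_divide powr_powr)
    finally have "real (g x) powr \<rho> * a x \<le> S powr \<rho> / a x powr (r * \<rho>) * a x"
      using ax by (intro mult_right_mono) auto
    also have "\<dots> = S powr \<rho> * (a x powr 1 / a x powr (r * \<rho>))"
      using ax by simp
    also have "a x powr 1 / a x powr (r * \<rho>) = a x powr r"
      by (simp only: powr_diff[symmetric] \<open>1 - r * \<rho> = r\<close>)
    finally show ?thesis .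
  qed
  have "(\<Sum>x\<in>A. real (g x) powr \<rho> * a x) \<le> (\<Sum>x\<in>A. S powr \<rho> * a x powr r)"
    by (rule sum_mono) (rule term_le)
  also have "\<dots> = S powr \<rho> * S" by (simp add: S_def sum_distrib_left)
  also have "\<dots> = S powr (1 + \<rho>)" using \<open>S \<ge> 0\<close> by (simp add: powr_add)
  finally show ?thesis by (simp add: S_def r_def)
qed

lemma sum_powr_divide_powr:
  fixes b :: "'a \<Rightarrow> real"
  assumes nonneg: "\<And>x. x \<in> A \<Longrightarrow> b x \<ge> 0" and c: "c > 0" and s: "s > 0"
  shows "(\<Sum>x\<in>A. (b x / c) powr (1 / s)) powr s = (\<Sum>x\<in>A. b x powr (1 / s)) powr s / c"
proof -
  have "(\<Sum>x\<in>A. (b x / c) powr (1 / s)) = (\<Sum>x\<in>A. b x powr (1 / s)) / c powr (1 / s)"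
    using nonneg c by (simp add: powr_divide sum_divide_distrib)
  then show ?thesis
    using nonneg c s by (simp add: powr_divide powr_powr sum_nonneg)
qed

lemma escort_cond_eq:
  fixes P :: "'x::finite \<Rightarrow> 'y \<Rightarrow> real"
  assumes nonneg: "\<And>x. P x y \<ge> 0" and marg: "(\<Sum>x\<in>UNIV. P x y) > 0"
  shows "escort_cond q P x y = P x y powr q / (\<Sum>x'\<in>UNIV. P x' y powr q)"
proof -
  let ?m = "\<Sum>x\<in>UNIV. P x y"
  have "cond_prob P x' y powr q = P x' y powr q / ?m powr q" for x'
    using nonneg marg by (simp add: cond_prob_def powr_divide)
  moreover have "?m powr q > 0" using marg by simp
  ultimately show ?thesis
    unfolding escort_cond_def by (simp add: sum_divide_distrib[symmetric])
qed

lemma q_expect_escort: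
  fixes P :: "'x::finite \<Rightarrow> 'y::finite \<Rightarrow> real"
  assumes pos: "\<And>x y. P x y > 0"
  shows "q_expect q P F = (\<Sum>y\<in>UNIV. escort_marg q P y * (\<Sum>x\<in>UNIV. F x y * escort_cond q P x y))"
proof -
  define T where "T y = (\<Sum>x\<in>UNIV. P x y powr q)" for y
  define Z where "Z = (\<Sum>x\<in>UNIV. \<Sum>y\<in>UNIV. P x y powr q)"
  have "T y > 0" for y
    unfolding T_def by (rule sum_pos) (use pos in \<open>auto simp: less_imp_neq[symmetric]\<close>)
  then have "T y \<noteq> 0" for y by (metis less_irrefl)
  then have "escort_marg q P y * escort_cond q P x y = P x y powr q / Z" for x y
    using pos by (simp add: escort_marg_def escort_cond_eq less_imp_le sum_pos
        T_def[symmetric] Z_def[symmetric])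
  then have "(\<Sum>y\<in>UNIV. escort_marg q P y * (\<Sum>x\<in>UNIV. F x y * escort_cond q P x y))
      = (\<Sum>y\<in>UNIV. \<Sum>x\<in>UNIV. F x y * P x y powr q / Z)"
    by (simp add: sum_distrib_left mult_ac)
  also have "\<dots> = q_expect q P F"
    unfolding q_expect_def Z_def by (subst sum.swap) (simp add: sum_divide_distrib)
  finally show ?thesis ..
qed

theorem theorem3:
  fixes P :: "'x::finite \<Rightarrow> 'y::finite \<Rightarrow> real"
    and G :: "'x \<Rightarrow> 'y \<Rightarrow> nat"
    and q \<rho> :: real
  assumes pos: "\<And>x y. P x y > 0"
    and sum1: "(\<Sum>x\<in>UNIV. \<Sum>y\<in>UNIV. P x y) = 1"
    and guess: "cond_guessing G"
    and opt: "\<And>y x x'. G x y < G x' y \<Longrightarrow> escort_cond q P x y \<ge> escort_cond q P x' y"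
    and rho: "\<rho> > 0"
  shows "(q_expect q P (\<lambda>x y. real (G x y) powr \<rho>)
           \<le> (\<Sum>y\<in>UNIV. escort_marg q P y *
                 (\<Sum>x\<in>UNIV. escort_cond q P x y powr (1 / (1 + \<rho>))) powr (1 + \<rho>))) \<and>
         ((\<Sum>y\<in>UNIV. escort_marg q P y *
                 (\<Sum>x\<in>UNIV. escort_cond q P x y powr (1 / (1 + \<rho>))) powr (1 + \<rho>))
         = (\<Sum>y\<in>UNIV. (\<Sum>x\<in>UNIV. P x y powr (q / (1 + \<rho>))) powr (1 + \<rho>))
           / (\<Sum>y\<in>UNIV. \<Sum>x\<in>UNIV. P x y powr q))"
proof -
  let ?bound = "\<lambda>y. escort_marg q P y *
    (\<Sum>x\<in>UNIV. escort_cond q P x y powr (1 / (1 + \<rho>))) powr (1 + \<rho>)"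
  have marg: "(\<Sum>x\<in>UNIV. P x y) > 0" for y
    by (rule sum_pos) (auto simp: pos)
  have col: "(\<Sum>x\<in>UNIV. P x y powr q) > 0" for y
    by (rule sum_pos) (use pos in \<open>auto simp: less_imp_neq[symmetric]\<close>)
  have swap: "(\<Sum>x\<in>UNIV. \<Sum>y\<in>UNIV. P x y powr q) = (\<Sum>y\<in>UNIV. \<Sum>x\<in>UNIV. P x y powr q)"
    by (rule sum.swap)
  have ec: "escort_cond q P x y = P x y powr q / (\<Sum>x'\<in>UNIV. P x' y powr q)" for x y
    using escort_cond_eq[OF less_imp_le[OF pos] marg] .
  have moment: "(\<Sum>x\<in>UNIV. real (G x y) powr \<rho> * escort_cond q P x y)
      \<le> (\<Sum>x\<in>UNIV. escort_cond q P x y powr (1 / (1 + \<rho>))) powr (1 + \<rho>)" for y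
    using guess opt col rho
    by (intro guessing_moment_le[where n = "CARD('x)"])
      (auto simp: cond_guessing_def ec less_imp_neq[OF pos, symmetric] intro!: divide_pos_pos)
  have "q_expect q P (\<lambda>x y. real (G x y) powr \<rho>) \<le> (\<Sum>y\<in>UNIV. ?bound y)"
    unfolding q_expect_escort[OF pos]
    by (intro sum_mono mult_left_mono moment)
      (simp add: escort_marg_def sum_nonneg divide_nonneg_nonneg)
  moreover have "?bound y = (\<Sum>x\<in>UNIV. P x y powr (q / (1 + \<rho>))) powr (1 + \<rho>)
      / (\<Sum>y\<in>UNIV. \<Sum>x\<in>UNIV. P x y powr q)" for y
    using col[of y] rho pos
    by (simp add: ec sum_powr_divide_powr powr_powr escort_marg_def swap)
  ultimately show ?thesis
    by (simp add: sum_divide_distrib)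
qed

end
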